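(* Let $\pi$ be a smooth, positive probability density on the torus $\mathbb{T}^d$ and $\gamma$ a smooth vector field on $\mathbb{T}^d$ with $\nabla\cdot(\pi\gamma)=0$. Let $\Phi_{\Delta t}:\mathbb{T}^d\to\mathbb{T}^d$ be a numerical flow for $\dot x=\gamma(x)$ with $\Phi_{\Delta t}(x)=x+\gamma(x)\Delta t+K_1(x,\Delta t)\Delta t^2$, where $K_1$ is bounded uniformly on $\mathbb{T}^d$ for $\Delta t$ small, and suppose there exist $\Delta t_0>0$ and $L>0$ with $|\Phi_{\Delta t}(z_1)-\Phi_{\Delta t}(z_2)|\le L|z_1-z_2|$ for all $z_1,z_2$ and all $\Delta t<\Delta t_0$. Let $(\xi_n)$ be i.i.d. $\mathcal{N}(0,I)$ and define, with the same noise and $\widetilde{Z}_0=\widetilde{Y}_0=x$, $$\widetilde{Z}_{n+1}=\Phi_{\Delta t}(\widetilde{Z}_n)+\nabla\log\pi(\Phi_{\Delta t}(\widetilde{Z}_n))\Delta t+\sqrt{2\Delta t}\,\xi_n,\qquad \widetilde{Y}_{n+1}=\widetilde{Y}_n+\nabla\log\pi(\widetilde{Y}_n)\Delta t+\gamma(\widetilde{Y}_n)\Delta t+\sqrt{2\Delta t}\,\xi_n.$$ Then for $t=n\Delta t$ there exists a constant $C(t)>0$ independent of $\Delta t$ such that $\mathbb{E}_x|\widetilde{Y}_n-\widetilde{Z}_n|\le C(t)\Delta t$ for $\Delta t$ sufficiently small.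
   Context: $\widetilde{Z}_n$ is the unadjusted (non-Metropolised) Lie–Trotter splitting scheme and $\widetilde{Y}_n$ is the Euler–Maruyama discretisation of $dY_t=(\nabla\log\pi(Y_t)+\gamma(Y_t))dt+\sqrt2\,dW_t$. $\mathbb{E}_x$ denotes expectation with both chains started at $x$. *)

theory Defs
  imports "HOL-Probability.Probability"
begin

text \<open>The torus T^d is represented by its universal cover real^'d: functions on the
torus are Z^d-periodic functions on real^'d, and the chains are taken on the lift.\<close>

definition partial :: "'d::finite \<Rightarrow> (real^'d \<Rightarrow> real) \<Rightarrow> real^'d \<Rightarrow> real" where
  "partial i f x = frechet_derivative f (at x) (axis i 1)"

inductive_set iter_partials :: "(real^'d::finite \<Rightarrow> real) \<Rightarrow> (real^'d \<Rightarrow> real) set"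
  for f where
  base: "f \<in> iter_partials f"
| step: "g \<in> iter_partials f \<Longrightarrow> partial i g \<in> iter_partials f"

definition smooth_fun :: "(real^'d::finite \<Rightarrow> real) \<Rightarrow> bool" where
  "smooth_fun f \<longleftrightarrow> (\<forall>g\<in>iter_partials f. \<forall>x. g differentiable (at x))"

definition smooth_field :: "(real^'d::finite \<Rightarrow> real^'d) \<Rightarrow> bool" where
  "smooth_field F \<longleftrightarrow> (\<forall>j. smooth_fun (\<lambda>x. F x $ j))"

definition grad :: "(real^'d::finite \<Rightarrow> real) \<Rightarrow> real^'d \<Rightarrow> real^'d" where
  "grad f x = (\<chi> i. partial i f x)"

definition divergence :: "(real^'d::finite \<Rightarrow> real^'d) \<Rightarrow> real^'d \<Rightarrow> real" where
  "divergence F x = (\<Sum>i\<in>UNIV. partial i (\<lambda>y. F y $ i) x)"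

definition periodic :: "(real^'d::finite \<Rightarrow> 'b) \<Rightarrow> bool" where
  "periodic f \<longleftrightarrow> (\<forall>x i. f (x + axis i 1) = f x)"

definition std_normal_vec_density :: "real^'d::finite \<Rightarrow> real" where
  "std_normal_vec_density x = (2 * pi) powr (- real CARD('d) / 2) * exp (- (norm x)\<^sup>2 / 2)"

text \<open>Splitting chain: Phi is the numerical flow at the given step dt, b = grad log pi.\<close>
primrec Zchain :: "(real^'d::finite \<Rightarrow> real^'d) \<Rightarrow> (real^'d \<Rightarrow> real^'d) \<Rightarrow> real
    \<Rightarrow> (nat \<Rightarrow> 'w \<Rightarrow> real^'d) \<Rightarrow> real^'d \<Rightarrow> nat \<Rightarrow> 'w \<Rightarrow> real^'d" where
  "Zchain Phi b dt xi x 0 w = x"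
| "Zchain Phi b dt xi x (Suc n) w =
     Phi (Zchain Phi b dt xi x n w) + dt *\<^sub>R b (Phi (Zchain Phi b dt xi x n w))
     + sqrt (2 * dt) *\<^sub>R xi n w"

primrec Ychain :: "(real^'d::finite \<Rightarrow> real^'d) \<Rightarrow> (real^'d \<Rightarrow> real^'d) \<Rightarrow> real
    \<Rightarrow> (nat \<Rightarrow> 'w \<Rightarrow> real^'d) \<Rightarrow> real^'d \<Rightarrow> nat \<Rightarrow> 'w \<Rightarrow> real^'d" where
  "Ychain b g dt xi x 0 w = x"
| "Ychain b g dt xi x (Suc n) w =
     Ychain b g dt xi x n w + dt *\<^sub>R b (Ychain b g dt xi x n w)
     + dt *\<^sub>R g (Ychain b g dt xi x n w) + sqrt (2 * dt) *\<^sub>R xi n w"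

end

theory Submission
  imports Defs
begin

text \<open>Both chains are driven by the same noise, so the noise cancels in the difference and the
estimate is pathwise. Writing \<open>e\<^sub>k = |Y\<^sub>k - Z\<^sub>k|\<close>, the expansion
\<open>\<Phi>(z) = z + \<gamma>(z)\<Delta>t + K\<^sub>1\<Delta>t\<^sup>2\<close> and the Lipschitz continuity of \<open>\<gamma>\<close> and \<open>\<nabla>log \<pi>\<close> give
\<open>e\<^sub>k\<^sub>+\<^sub>1 \<le> (1 + c\<Delta>t) e\<^sub>k + a\<Delta>t\<^sup>2\<close>, and the discrete Gronwall inequality yields
\<open>e\<^sub>n \<le> n a \<Delta>t\<^sup>2 e\<^sup>c\<^sup>n\<^sup>\<Delta>\<^sup>t = t a e\<^sup>c\<^sup>t \<Delta>t\<close>. The Lipschitz constants and the bound on \<open>\<gamma>\<close> exist because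
continuous periodic functions are bounded.\<close>

lemma periodic_add_of_nat_axis:
  assumes "periodic f"
  shows "f (x + real m *\<^sub>R axis i 1) = f x"
proof (induction m)
  case (Suc m)
  have "f (x + real (Suc m) *\<^sub>R axis i 1) = f ((x + real m *\<^sub>R axis i 1) + axis i 1)"
    by (simp add: algebra_simps)
  also have "\<dots> = f (x + real m *\<^sub>R axis i 1)"
    using assms unfolding periodic_def by blast
  finally show ?case using Suc by simp
qed simp

lemma periodic_add_of_int_axis:
  assumes "periodic f"
  shows "f (x + of_int k *\<^sub>R axis i 1) = f x"
proof (cases "k \<ge> 0")
  case True
  then obtain m where "k = int m" by (metis nonneg_eq_int)
  then show ?thesis using periodic_add_of_nat_axis[OF assms] by simp
next
  case False
  then have k: "k = - int (nat (- k))" by simp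
  have "f (x + of_int k *\<^sub>R axis i 1)
      = f ((x + of_int k *\<^sub>R axis i 1) + real (nat (- k)) *\<^sub>R axis i 1)"
    using periodic_add_of_nat_axis[OF assms] by simp
  also have "\<dots> = f x" by (subst k) (simp add: algebra_simps)
  finally show ?thesis .
qed

lemma periodic_add_lattice_sum:
  assumes "periodic f" "finite S"
  shows "f (x + (\<Sum>i\<in>S. of_int (k i) *\<^sub>R axis i 1)) = f x"
  using assms(2)
proof (induction S)
  case (insert j S)
  have "f (x + (\<Sum>i\<in>insert j S. of_int (k i) *\<^sub>R axis i 1))
      = f ((x + (\<Sum>i\<in>S. of_int (k i) *\<^sub>R axis i 1)) + of_int (k j) *\<^sub>R axis j 1)"
    using insert by (simp add: algebra_simps)
  also have "\<dots> = f (x + (\<Sum>i\<in>S. of_int (k i) *\<^sub>R axis i 1))"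
    by (rule periodic_add_of_int_axis[OF assms(1)])
  finally show ?case using insert by simp
qed simp

lemma periodic_eq_at_fractional_part:
  fixes f :: "real^'d::finite \<Rightarrow> 'b"
  assumes "periodic f"
  shows "f x = f (x - (\<chi> i. of_int \<lfloor>x $ i\<rfloor>))"
proof -
  have floor_expansion:
    "(\<chi> i. of_int \<lfloor>x $ i\<rfloor>) = (\<Sum>i\<in>UNIV. of_int \<lfloor>x $ i\<rfloor> *\<^sub>R axis i (1::real))"
    using basis_expansion[of "(\<chi> i. of_int \<lfloor>x $ i\<rfloor>) :: real^'d"]
    by (simp add: scalar_mult_eq_scaleR)
  have "f ((x - (\<chi> i. of_int \<lfloor>x $ i\<rfloor>)) + (\<Sum>i\<in>UNIV. of_int \<lfloor>x $ i\<rfloor> *\<^sub>R axis i 1))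
        = f (x - (\<chi> i. of_int \<lfloor>x $ i\<rfloor>))"
    by (rule periodic_add_lattice_sum[OF assms]) simp
  then show ?thesis using floor_expansion by (metis diff_add_cancel)
qed

lemma continuous_periodic_bounded:
  fixes g :: "real^'d::finite \<Rightarrow> 'b::real_normed_vector"
  assumes "continuous_on UNIV g" "periodic g"
  obtains B where "\<And>x. norm (g x) \<le> B"
proof -
  have "compact (g ` cbox 0 1)"
    by (rule compact_continuous_image) (auto intro: continuous_on_subset[OF assms(1)])
  then obtain B where B: "\<forall>y\<in>g ` cbox 0 1. norm y \<le> B"
    using compact_imp_bounded bounded_iff by metis
  have "norm (g x) \<le> B" for x
  proof -
    have "x - (\<chi> i. of_int \<lfloor>x $ i\<rfloor>) \<in> cbox 0 1"
      unfolding mem_box_cart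
      by (auto simp: of_int_floor_le) (smt (verit) real_of_int_floor_add_one_gt)
    then show ?thesis using B periodic_eq_at_fractional_part[OF assms(2), of x] by auto
  qed
  then show ?thesis by (rule that)
qed

lemma smooth_fun_differentiable:
  assumes "smooth_fun f" "g \<in> iter_partials f"
  shows "g differentiable (at x)"
  using assms unfolding smooth_fun_def by blast

lemma smooth_fun_continuous_on:
  assumes "smooth_fun f" "g \<in> iter_partials f"
  shows "continuous_on UNIV g"
  using smooth_fun_differentiable[OF assms]
  by (simp add: differentiable_imp_continuous_on differentiable_on_def differentiable_at_withinI)

lemma periodic_partial:
  fixes f :: "real^'d::finite \<Rightarrow> real"
  assumes diff: "\<And>x. f differentiable (at x)" and per: "periodic f"
  shows "periodic (partial i f)"
  unfolding periodic_def
proof (intro allI)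
  fix x :: "real^'d" and j :: 'd
  let ?a = "axis j (1::real)"
  have "(f has_derivative frechet_derivative f (at (x + ?a))) (at (x + ?a))"
    using diff frechet_derivative_works by blast
  then have "((\<lambda>y. f (y + ?a)) has_derivative frechet_derivative f (at (x + ?a))) (at x)"
    using has_derivative_compose[OF has_derivative_add[OF has_derivative_ident has_derivative_const]]
    by (simp add: o_def)
  moreover have "(\<lambda>y. f (y + ?a)) = f" using per unfolding periodic_def by auto
  ultimately have "frechet_derivative f (at (x + ?a)) = frechet_derivative f (at x)"
    using frechet_derivative_at by metis
  then show "partial i f (x + ?a) = partial i f x" unfolding partial_def by simp
qed

lemma frechet_derivative_eq_sum_partial:
  fixes f :: "real^'d::finite \<Rightarrow> real"
  assumes "f differentiable (at x)"
  shows "frechet_derivative f (at x) h = (\<Sum>i\<in>UNIV. h $ i * partial i f x)"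
proof -
  have lin: "linear (frechet_derivative f (at x))"
    using assms frechet_derivative_works has_derivative_linear by blast
  have "frechet_derivative f (at x) h = frechet_derivative f (at x) (\<Sum>i\<in>UNIV. h $ i *\<^sub>R axis i 1)"
    using basis_expansion[of h] by (simp add: scalar_mult_eq_scaleR)
  also have "\<dots> = (\<Sum>i\<in>UNIV. h $ i * frechet_derivative f (at x) (axis i 1))"
    using lin by (simp add: linear_sum linear_scale)
  finally show ?thesis unfolding partial_def .
qed

lemma lipschitz_of_bounded_partials:
  fixes f :: "real^'d::finite \<Rightarrow> real"
  assumes diff: "\<And>x. f differentiable (at x)"
    and bounded: "\<And>i x. \<bar>partial i f x\<bar> \<le> B i"
  shows "(\<Sum>i\<in>UNIV. B i)-lipschitz_on UNIV f"
proof (rule lipschitz_onI)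
  show "0 \<le> (\<Sum>i\<in>UNIV. B i)"
    by (rule sum_nonneg) (meson bounded abs_ge_zero order_trans)
  have "onorm (frechet_derivative f (at x)) \<le> (\<Sum>i\<in>UNIV. B i)" for x
  proof (rule onorm_le)
    fix h :: "real^'d"
    have "norm (frechet_derivative f (at x) h) = \<bar>\<Sum>i\<in>UNIV. h $ i * partial i f x\<bar>"
      using frechet_derivative_eq_sum_partial[OF diff] by simp
    also have "\<dots> \<le> (\<Sum>i\<in>UNIV. \<bar>h $ i * partial i f x\<bar>)" by (rule sum_abs)
    also have "\<dots> \<le> (\<Sum>i\<in>UNIV. norm h * B i)"
      by (rule sum_mono) (simp add: abs_mult mult_mono' bounded component_le_norm_cart)
    finally show "norm (frechet_derivative f (at x) h) \<le> (\<Sum>i\<in>UNIV. B i) * norm h"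
      by (simp add: sum_distrib_left mult.commute)
  qed
  then show "dist (f x) (f y) \<le> (\<Sum>i\<in>UNIV. B i) * dist x y" for x y
    using differentiable_bound[of UNIV f "\<lambda>x. frechet_derivative f (at x)" "\<Sum>i\<in>UNIV. B i" x y]
      diff frechet_derivative_works by (auto simp: dist_norm dist_real_def)
qed

lemma lipschitz_of_continuous_periodic_partials:
  fixes f :: "real^'d::finite \<Rightarrow> real"
  assumes "\<And>x. f differentiable (at x)"
    and "\<And>i. continuous_on UNIV (partial i f)" and "\<And>i. periodic (partial i f)"
  obtains L where "L-lipschitz_on UNIV f"
proof -
  have "\<forall>i. \<exists>B. \<forall>x. norm (partial i f x) \<le> B"
    using continuous_periodic_bounded[OF assms(2,3)] by metis
  then obtain B where "\<And>i x. \<bar>partial i f x\<bar> \<le> B i" by (metis real_norm_def)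
  then show ?thesis using lipschitz_of_bounded_partials[OF assms(1)] that by blast
qed

lemma lipschitz_on_vec_lambda:
  fixes F :: "'a::metric_space \<Rightarrow> real^'e::finite"
  assumes "\<And>j. (L j)-lipschitz_on S (\<lambda>x. F x $ j)"
  shows "(\<Sum>j\<in>UNIV. L j)-lipschitz_on S F"
proof (rule lipschitz_onI)
  show "0 \<le> (\<Sum>j\<in>UNIV. L j)" using assms lipschitz_on_nonneg by (metis sum_nonneg)
  fix x y assume "x \<in> S" "y \<in> S"
  have "dist (F x) (F y) \<le> (\<Sum>j\<in>UNIV. \<bar>(F x - F y) $ j\<bar>)"
    unfolding dist_norm by (rule norm_le_l1_cart)
  also have "\<dots> \<le> (\<Sum>j\<in>UNIV. L j * dist x y)"
    using assms[THEN lipschitz_onD, OF \<open>x \<in> S\<close> \<open>y \<in> S\<close>] by (intro sum_mono) (simp add: dist_real_def)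
  finally show "dist (F x) (F y) \<le> (\<Sum>j\<in>UNIV. L j) * dist x y"
    by (simp add: sum_distrib_right)
qed

lemma smooth_periodic_lipschitz:
  fixes f :: "real^'d::finite \<Rightarrow> real"
  assumes "smooth_fun f" "periodic f"
  obtains L where "L-lipschitz_on UNIV f"
  using lipschitz_of_continuous_periodic_partials
    smooth_fun_differentiable[OF assms(1) iter_partials.base]
    smooth_fun_continuous_on[OF assms(1) iter_partials.step[OF iter_partials.base]]
    periodic_partial[OF smooth_fun_differentiable[OF assms(1) iter_partials.base] assms(2)]
  by metis

lemma smooth_periodic_field_lipschitz:
  fixes F :: "real^'d::finite \<Rightarrow> real^'d"
  assumes "smooth_field F" "periodic F"
  obtains L where "L-lipschitz_on UNIV F"
proof -
  have "\<forall>j. \<exists>L. L-lipschitz_on UNIV (\<lambda>x. F x $ j)"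
    using assms smooth_periodic_lipschitz unfolding smooth_field_def periodic_def
    by (metis vector_add_component)
  then obtain L where "\<And>j. (L j)-lipschitz_on UNIV (\<lambda>x. F x $ j)" by metis
  then show ?thesis using lipschitz_on_vec_lambda that by blast
qed

lemma grad_ln_component:
  fixes p :: "real^'d::finite \<Rightarrow> real"
  assumes "p differentiable (at x)" "p x > 0"
  shows "grad (\<lambda>y. ln (p y)) x $ i = partial i p x / p x"
proof -
  have "((\<lambda>y. ln (p y)) has_derivative (\<lambda>h. frechet_derivative p (at x) h / p x)) (at x)"
    using assms frechet_derivative_works
    by (auto intro!: derivative_eq_intros simp: divide_inverse)
  then show ?thesis
    unfolding grad_def partial_def by (simp add: frechet_derivative_at[symmetric])
qed

lemma grad_ln_lipschitz:
  fixes p :: "real^'d::finite \<Rightarrow> real"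
  assumes sm: "smooth_fun p" and pos: "\<forall>y. p y > 0" and per: "periodic p"
  obtains L where "L-lipschitz_on UNIV (grad (\<lambda>y. ln (p y)))"
proof -
  have "\<exists>L. L-lipschitz_on UNIV (\<lambda>x. partial i p x / p x)" for i
  proof -
    let ?q = "partial i p" and ?h = "\<lambda>x. partial i p x / p x"
    have qp: "?q \<in> iter_partials p" "\<And>j. partial j ?q \<in> iter_partials p"
      "\<And>j. partial j p \<in> iter_partials p"
      by (auto intro: iter_partials.intros)
    have dp: "\<And>x. p differentiable (at x)" and dq: "\<And>x. ?q differentiable (at x)"
      using smooth_fun_differentiable[OF sm iter_partials.base] smooth_fun_differentiable[OF sm qp(1)]
      by auto
    have p0: "p x \<noteq> 0" for x using pos by (metis less_irrefl)
    have h_deriv: "(?h has_derivative (\<lambda>v. (frechet_derivative ?q (at x) v * p x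
        - ?q x * frechet_derivative p (at x) v) / (p x * p x))) (at x)" for x
      using has_derivative_divide'[OF dq[of x, unfolded frechet_derivative_works]
          dp[of x, unfolded frechet_derivative_works]] p0 by simp
    then have dh: "\<And>x. ?h differentiable (at x)" using differentiable_def by blast
    have "partial j ?h x = (partial j ?q x * p x - ?q x * partial j p x) / (p x * p x)" for j x
      using frechet_derivative_at[OF h_deriv[of x], symmetric] by (simp add: partial_def)
    then have "partial j ?h = (\<lambda>x. (partial j ?q x * p x - ?q x * partial j p x) / (p x * p x))"
      for j by blast
    moreover have "continuous_on UNIV
        (\<lambda>x. (partial j ?q x * p x - ?q x * partial j p x) / (p x * p x))" for j
      using smooth_fun_continuous_on[OF sm] qp iter_partials.base p0
      by (intro continuous_intros) auto
    ultimately have "continuous_on UNIV (partial j ?h)" for j by simp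
    moreover have "periodic ?h"
      using periodic_partial[OF dp per, of i] per unfolding periodic_def by simp
    ultimately show ?thesis
      using lipschitz_of_continuous_periodic_partials[OF dh] periodic_partial[OF dh] by metis
  qed
  then obtain L where "\<And>i. (L i)-lipschitz_on UNIV (\<lambda>x. partial i p x / p x)" by metis
  moreover have "grad (\<lambda>y. ln (p y)) x $ i = partial i p x / p x" for x i
    using grad_ln_component smooth_fun_differentiable[OF sm iter_partials.base] pos by blast
  ultimately have "\<And>i. (L i)-lipschitz_on UNIV (\<lambda>x. grad (\<lambda>y. ln (p y)) x $ i)" by simp
  then show ?thesis by (rule that[OF lipschitz_on_vec_lambda])
qed

lemma splitting_step_error:
  fixes Y Z P K s :: "'a::real_normed_vector" and gam b :: "'a \<Rightarrow> 'a"
  assumes P: "P = Z + dt *\<^sub>R gam Z + dt\<^sup>2 *\<^sub>R K"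
    and lg: "norm (gam Y - gam Z) \<le> Lg * norm (Y - Z)"
    and lb: "norm (b Y - b P) \<le> Lb * norm (Y - P)"
    and G: "norm (gam Z) \<le> G" and K: "norm K \<le> B"
    and dt: "0 < dt" "dt \<le> 1" and Lb: "Lb \<ge> 0"
  shows "norm ((Y + dt *\<^sub>R b Y + dt *\<^sub>R gam Y + s) - (P + dt *\<^sub>R b P + s))
         \<le> (1 + (Lg + Lb) * dt) * norm (Y - Z) + (B + Lb * G + Lb * B) * dt\<^sup>2"
proof -
  let ?e = "norm (Y - Z)"
  have "(Y + dt *\<^sub>R b Y + dt *\<^sub>R gam Y + s) - (P + dt *\<^sub>R b P + s)
      = (Y - Z) + dt *\<^sub>R (gam Y - gam Z) - dt\<^sup>2 *\<^sub>R K + dt *\<^sub>R (b Y - b P)"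
    by (simp add: P algebra_simps)
  then have diff: "norm ((Y + dt *\<^sub>R b Y + dt *\<^sub>R gam Y + s) - (P + dt *\<^sub>R b P + s))
      \<le> ?e + dt * norm (gam Y - gam Z) + dt\<^sup>2 * norm K + dt * norm (b Y - b P)"
    using dt by (smt (verit) norm_scaleR norm_triangle_ineq norm_triangle_ineq4 abs_of_pos
        zero_less_power)
  have "Y - P = (Y - Z) - dt *\<^sub>R gam Z - dt\<^sup>2 *\<^sub>R K" by (simp add: P algebra_simps)
  then have "norm (Y - P) \<le> ?e + dt * norm (gam Z) + dt\<^sup>2 * norm K"
    using dt by (smt (verit) norm_scaleR norm_triangle_ineq4 abs_of_pos zero_less_power)
  also have "\<dots> \<le> ?e + dt * G + dt\<^sup>2 * B"
    using G K dt by (smt (verit) mult_left_mono zero_less_power)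
  finally have "dt * norm (b Y - b P) \<le> dt * (Lb * (?e + dt * G + dt\<^sup>2 * B))"
    using lb Lb dt by (smt (verit) mult_left_mono)
  moreover have "dt * (Lb * (dt\<^sup>2 * B)) \<le> Lb * B * dt\<^sup>2"
    using dt Lb K norm_ge_zero[of K]
    by (smt (verit) mult_right_mono mult_nonneg_nonneg mult.commute mult.left_commute
        zero_le_power2 mult_left_le_one_le)
  moreover have "dt * norm (gam Y - gam Z) \<le> dt * (Lg * ?e)" "dt\<^sup>2 * norm K \<le> dt\<^sup>2 * B"
    using lg K dt by simp_all
  ultimately show ?thesis
    using diff by (simp add: algebra_simps power2_eq_square)
qed

lemma discrete_gronwall:
  fixes e :: "nat \<Rightarrow> real"
  assumes "e 0 = 0" and step: "\<And>k. e (Suc k) \<le> q * e k + r" and "q \<ge> 1" and "r \<ge> 0"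
  shows "e n \<le> real n * r * q ^ n"
proof (induction n)
  case (Suc n)
  have "e (Suc n) \<le> q * (real n * r * q ^ n) + r"
    using step[of n] mult_left_mono[OF Suc, of q] \<open>q \<ge> 1\<close> by linarith
  also have "\<dots> \<le> q * (real n * r * q ^ n) + r * q ^ Suc n"
    using \<open>q \<ge> 1\<close> \<open>r \<ge> 0\<close> one_le_power[of q "Suc n"] mult_left_mono[of 1 _ r] by simp
  also have "\<dots> = real (Suc n) * r * q ^ Suc n" by (simp add: algebra_simps)
  finally show ?case .
qed (simp add: assms)

lemma Ychain_Zchain_dist_le:
  fixes gam b K Phi :: "real^'d::finite \<Rightarrow> real^'d"
  assumes "Lg-lipschitz_on UNIV gam" "Lb-lipschitz_on UNIV b"
    and "\<And>y. norm (gam y) \<le> G" "\<And>y. norm (K y) \<le> B"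
    and Phi: "\<And>y. Phi y = y + dt *\<^sub>R gam y + dt\<^sup>2 *\<^sub>R K y"
    and dt: "0 < dt" "dt \<le> 1"
  defines "a \<equiv> B + Lb * G + Lb * B"
  shows "norm (Ychain b gam dt xi x n w - Zchain Phi b dt xi x n w)
    \<le> real n * dt * a * exp ((Lg + Lb) * (real n * dt)) * dt"
proof -
  let ?e = "\<lambda>k. norm (Ychain b gam dt xi x k w - Zchain Phi b dt xi x k w)"
  have L: "Lg \<ge> 0" "Lb \<ge> 0" using assms(1,2) lipschitz_on_nonneg by blast+
  have "a \<ge> 0" unfolding a_def using L assms(3,4) norm_ge_zero
    by (metis add_nonneg_nonneg mult_nonneg_nonneg order_trans)
  have step: "?e (Suc k) \<le> (1 + (Lg + Lb) * dt) * ?e k + a * dt\<^sup>2" for k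
    unfolding Ychain.simps Zchain.simps a_def
    by (rule splitting_step_error[OF Phi])
       (use assms(1-4) dt L in \<open>auto simp: lipschitz_on_normD\<close>)
  have "?e n \<le> real n * (a * dt\<^sup>2) * (1 + (Lg + Lb) * dt) ^ n"
    by (rule discrete_gronwall[where e = ?e, OF _ step]) (use L dt \<open>a \<ge> 0\<close> in auto)
  also have "\<dots> \<le> real n * (a * dt\<^sup>2) * exp ((Lg + Lb) * dt) ^ n"
    using L dt \<open>a \<ge> 0\<close> by (intro mult_left_mono power_mono) (auto simp: exp_ge_add_one_self)
  also have "\<dots> = real n * dt * a * exp ((Lg + Lb) * (real n * dt)) * dt"
    by (simp add: exp_of_nat_mult[symmetric] power2_eq_square algebra_simps)
  finally show ?thesis .
qed

lemma chains_measurable: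
  assumes "continuous_on UNIV b" "continuous_on UNIV gam" "continuous_on UNIV Phi"
    and "\<And>k. xi k \<in> borel_measurable M"
  shows "Ychain b gam dt xi x n \<in> borel_measurable M"
    and "Zchain Phi b dt xi x n \<in> borel_measurable M"
proof -
  have [measurable]: "b \<in> borel_measurable borel" "gam \<in> borel_measurable borel"
    "Phi \<in> borel_measurable borel"
    using assms(1-3) by (auto intro: borel_measurable_continuous_onI)
  note [measurable] = assms(4)
  show "Ychain b gam dt xi x n \<in> borel_measurable M"
    by (induction n) simp_all
  show "Zchain Phi b dt xi x n \<in> borel_measurable M"
    by (induction n) simp_all
qed

lemma (in prob_space) chains_expected_dist_le:
  fixes gam b K Phi :: "real^'d::finite \<Rightarrow> real^'d" and x :: "real^'d"
  assumes "Lg-lipschitz_on UNIV gam" "Lb-lipschitz_on UNIV b"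
    and "\<And>y. norm (gam y) \<le> G" "\<And>y. norm (K y) \<le> B"
    and "\<And>y. Phi y = y + dt *\<^sub>R gam y + dt\<^sup>2 *\<^sub>R K y" and "continuous_on UNIV Phi"
    and "\<And>k. xi k \<in> borel_measurable M"
    and "0 < dt" "dt \<le> 1" "real n * dt = t"
  defines "f \<equiv> \<lambda>w. norm (Ychain b gam dt xi x n w - Zchain Phi b dt xi x n w)"
  shows "integrable M f"
    and "(\<integral>w. f w \<partial>M) \<le> t * (B + Lb * G + Lb * B) * exp ((Lg + Lb) * t) * dt"
proof -
  have bound: "\<bar>f w\<bar> \<le> t * (B + Lb * G + Lb * B) * exp ((Lg + Lb) * t) * dt" for w
    using Ychain_Zchain_dist_le[OF assms(1-5,8,9), of xi x n w, unfolded \<open>real n * dt = t\<close>]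
    by (simp add: f_def)
  have "f \<in> borel_measurable M"
    unfolding f_def using chains_measurable[OF lipschitz_on_continuous_on[OF assms(2)]
        lipschitz_on_continuous_on[OF assms(1)] assms(6,7)] by measurable
  then show "integrable M f"
    using bound by (intro integrable_const_bound[where B = "t * (B + Lb * G + Lb * B)
        * exp ((Lg + Lb) * t) * dt"]) auto
  then show "(\<integral>w. f w \<partial>M) \<le> t * (B + Lb * G + Lb * B) * exp ((Lg + Lb) * t) * dt"
    using bound abs_le_D1 by (intro integral_le_const) auto
qed

theorem lemmaC1:
  fixes M :: "'w measure"
    and p :: "real^'d::finite \<Rightarrow> real"
    and gamma :: "real^'d \<Rightarrow> real^'d"
    and Phi :: "real \<Rightarrow> real^'d \<Rightarrow> real^'d"
    and K1 :: "real^'d \<Rightarrow> real \<Rightarrow> real^'d"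
    and xi :: "nat \<Rightarrow> 'w \<Rightarrow> real^'d"
    and x :: "real^'d"
  assumes "prob_space M"
    and "smooth_fun p" and "\<forall>y. p y > 0" and "periodic p"
    and "integral (cbox 0 1) p = 1"
    and "smooth_field gamma" and "periodic gamma"
    and "\<forall>y. divergence (\<lambda>z. p z *\<^sub>R gamma z) y = 0"
    and "\<forall>dt y i. dt > 0 \<longrightarrow> Phi dt (y + axis i 1) = Phi dt y + axis i 1"
    and "\<forall>dt y. dt > 0 \<longrightarrow> Phi dt y = y + dt *\<^sub>R gamma y + dt\<^sup>2 *\<^sub>R K1 y dt"
    and "\<exists>B \<delta>. \<delta> > 0 \<and> (\<forall>dt y. 0 < dt \<and> dt < \<delta> \<longrightarrow> norm (K1 y dt) \<le> B)"
    and "\<exists>dt0 L. dt0 > 0 \<and> L > 0 \<and>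
           (\<forall>dt z1 z2. 0 < dt \<and> dt < dt0 \<longrightarrow> norm (Phi dt z1 - Phi dt z2) \<le> L * norm (z1 - z2))"
    and "prob_space.indep_vars M (\<lambda>_. borel) xi UNIV"
    and "\<forall>n. distributed M lborel (xi n) (\<lambda>y. ennreal (std_normal_vec_density y))"
  shows "\<forall>t > 0. \<exists>C > 0. \<exists>\<delta> > 0. \<forall>n dt. 0 < dt \<and> dt < \<delta> \<and> real n * dt = t \<longrightarrow>
           integrable M (\<lambda>w. norm (Ychain (grad (\<lambda>y. ln (p y))) gamma dt xi x n w
                                    - Zchain (Phi dt) (grad (\<lambda>y. ln (p y))) dt xi x n w)) \<and>
           (\<integral>w. norm (Ychain (grad (\<lambda>y. ln (p y))) gamma dt xi x n w
                        - Zchain (Phi dt) (grad (\<lambda>y. ln (p y))) dt xi x n w) \<partial>M) \<le> C * dt"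
proof (intro allI impI)
  fix t :: real assume "t > 0"
  interpret prob_space M by (rule assms(1))
  let ?b = "grad (\<lambda>y. ln (p y))"
  obtain Lg where Lg: "Lg-lipschitz_on UNIV gamma"
    using smooth_periodic_field_lipschitz[OF assms(6,7)] .
  obtain G where G: "\<And>y. norm (gamma y) \<le> G"
    using continuous_periodic_bounded[OF lipschitz_on_continuous_on[OF Lg] assms(7)] by blast
  obtain Lb where Lb: "Lb-lipschitz_on UNIV ?b"
    using grad_ln_lipschitz[OF assms(2-4)] .
  obtain B \<delta>K where K: "\<delta>K > 0" "\<And>dt y. 0 < dt \<Longrightarrow> dt < \<delta>K \<Longrightarrow> norm (K1 y dt) \<le> B"
    using assms(11) by blast
  obtain dt0 L where dt0: "dt0 > 0" and "L > 0" and Phi_lip: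
    "\<And>dt z1 z2. 0 < dt \<Longrightarrow> dt < dt0 \<Longrightarrow> norm (Phi dt z1 - Phi dt z2) \<le> L * norm (z1 - z2)"
    using assms(12) by blast
  have Phi_cont: "continuous_on UNIV (Phi dt)" if "0 < dt" "dt < dt0" for dt
    using Phi_lip[OF that] \<open>L > 0\<close>
    by (intro lipschitz_on_continuous_on[of L] lipschitz_onI) (auto simp: dist_norm)
  have xi: "\<And>k. xi k \<in> borel_measurable M"
    using assms(14) distributed_measurable measurable_lborel1 by blast
  have "norm (K1 0 (\<delta>K / 2)) \<le> B" using K by simp
  then have "0 \<le> B" using norm_ge_zero order_trans by blast
  moreover have "0 \<le> G" using G[of 0] norm_ge_zero order_trans by blast
  ultimately have a_nonneg: "0 \<le> B + Lb * G + Lb * B"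
    using lipschitz_on_nonneg[OF Lb] by simp
  show "\<exists>C>0. \<exists>\<delta>>0. \<forall>n dt. 0 < dt \<and> dt < \<delta> \<and> real n * dt = t \<longrightarrow>
           integrable M (\<lambda>w. norm (Ychain ?b gamma dt xi x n w - Zchain (Phi dt) ?b dt xi x n w)) \<and>
           (\<integral>w. norm (Ychain ?b gamma dt xi x n w - Zchain (Phi dt) ?b dt xi x n w) \<partial>M) \<le> C * dt"
  proof (rule exI[of _ "t * (B + Lb * G + Lb * B) * exp ((Lg + Lb) * t) + 1"],
      intro conjI exI[of _ "min 1 (min \<delta>K dt0)"] allI impI)
    fix n dt assume dt: "0 < dt \<and> dt < min 1 (min \<delta>K dt0) \<and> real n * dt = t"
    then have "0 < dt" "dt \<le> 1" "real n * dt = t" and "\<And>y. norm (K1 y dt) \<le> B"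
      and "\<And>y. Phi dt y = y + dt *\<^sub>R gamma y + dt\<^sup>2 *\<^sub>R K1 y dt"
      and "continuous_on UNIV (Phi dt)"
      using K(2) Phi_cont assms(10) by auto
    note expected = chains_expected_dist_le[where xi = xi, OF Lg Lb G this(4-6) xi this(1-3)]
    show "integrable M (\<lambda>w. norm (Ychain ?b gamma dt xi x n w - Zchain (Phi dt) ?b dt xi x n w))"
      using expected(1) .
    show "(\<integral>w. norm (Ychain ?b gamma dt xi x n w - Zchain (Phi dt) ?b dt xi x n w) \<partial>M)
        \<le> (t * (B + Lb * G + Lb * B) * exp ((Lg + Lb) * t) + 1) * dt"
      by (rule order_trans[OF expected(2)]) (use \<open>0 < dt\<close> in \<open>simp add: distrib_right\<close>)
  qed (use \<open>t > 0\<close> a_nonneg K(1) dt0 in \<open>auto intro: add_nonneg_pos\<close>)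
qed

end
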